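(* Let $a_n=\left|\Pi_n\wr C_2(1^11^1,1^11^2)\right|$. Then for $n\ge3$, $a_n=2a_{n-1}+(n-1)a_{n-2}$.
   Context: For $n\ge0$ let $[n]=\{1,\dots,n\}$. A $2$-colored set partition of $[n]$ is a set partition of $[n]$ together with an assignment of a color from $\{1,2\}$ to each element; $\Pi_n\wr C_2$ is the set of these. For a set $S$ of patterns, $\Pi_n\wr C_2(S)$ is the set of such colored partitions avoiding every pattern in $S$ in the pattern sense. For the patterns used here: $\sigma$ contains $1^11^1$ iff two elements in the same block have the same color; $\sigma$ contains $1^11^2$ iff there are $i<j$ in the same block with $i$ colored $1$ and $j$ colored $2$. *)

theory Defs
  imports "HOL-Library.Disjoint_Sets" "HOL-Library.FuncSet"
begin

definition colored_partitions :: "nat \<Rightarrow> (nat set set \<times> (nat \<Rightarrow> nat)) set" where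
  "colored_partitions n =
     {(P, c). partition_on {1..n} P \<and> c \<in> {1..n} \<rightarrow>\<^sub>E {1, 2}}"

definition contains_11_11 :: "nat set set \<times> (nat \<Rightarrow> nat) \<Rightarrow> bool" where
  "contains_11_11 \<sigma> = (\<exists>B\<in>fst \<sigma>. \<exists>i\<in>B. \<exists>j\<in>B. i \<noteq> j \<and> snd \<sigma> i = snd \<sigma> j)"

definition contains_11_12 :: "nat set set \<times> (nat \<Rightarrow> nat) \<Rightarrow> bool" where
  "contains_11_12 \<sigma> = (\<exists>B\<in>fst \<sigma>. \<exists>i\<in>B. \<exists>j\<in>B. i < j \<and> snd \<sigma> i = 1 \<and> snd \<sigma> j = 2)"

definition avoiding_count :: "nat \<Rightarrow> nat" where
  "avoiding_count n = card {\<sigma> \<in> colored_partitions n. \<not> contains_11_11 \<sigma> \<and> \<not> contains_11_12 \<sigma>}"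

end

theory Submission
  imports Defs
begin

text \<open>
  In an avoiding coloured partition the elements of a block have pairwise different colours, so
  every block has at most two elements, and a block \<open>{k, m}\<close> with \<open>k < m\<close> is forced to carry the
  colours \<open>2, 1\<close>. Classifying by the block of the largest element \<open>m\<close>: it is either \<open>{m}\<close> in one
  of two colours, or \<open>{k, m}\<close> for one of the \<open>n - 1\<close> smaller \<open>k\<close>. Deleting that block is a bijection
  onto the avoiding coloured partitions of the remaining elements, whose number depends only on
  their count; this gives \<open>2 a\<^sub>n\<^sub>-\<^sub>1 + (n - 1) a\<^sub>n\<^sub>-\<^sub>2\<close>.
\<close>

lemma partition_on_remove_block:
  assumes "partition_on A P" "B \<in> P"
  shows "partition_on (A - B) (P - {B})"
proof -
  have "disjnt B (\<Union>(P - {B}))"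
    using assms by (auto simp: partition_on_def disjoint_def disjnt_def)
  moreover have "insert B (P - {B}) = P"
    using assms(2) by auto
  ultimately show ?thesis
    using partition_on_insert assms(1) by metis
qed

lemma partition_on_insert_block:
  assumes "partition_on (A - B) Q" "B \<subseteq> A" "B \<noteq> {}"
  shows "partition_on A (insert B Q)"
proof -
  have "disjnt B (\<Union>Q)"
    using partition_onD1[OF assms(1)] by (auto simp: disjnt_def)
  then show ?thesis
    using partition_on_insert assms by metis
qed

definition avoiding_partitions :: "nat set \<Rightarrow> (nat set set \<times> (nat \<Rightarrow> nat)) set" where
  "avoiding_partitions A =
     {(P, c). partition_on A P \<and> c \<in> A \<rightarrow>\<^sub>E {1, 2} \<and> \<not> contains_11_11 (P, c) \<and> \<not> contains_11_12 (P, c)}"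

lemma avoiding_count_eq_card: "avoiding_count n = card (avoiding_partitions {1..n})"
  unfolding avoiding_count_def avoiding_partitions_def colored_partitions_def
  by (rule arg_cong[where f = card]) auto

lemma contains_11_11_insert:
  "contains_11_11 (insert B Q, c) \<longleftrightarrow> contains_11_11 ({B}, c) \<or> contains_11_11 (Q, c)"
  by (auto simp: contains_11_11_def)

lemma contains_11_12_insert:
  "contains_11_12 (insert B Q, c) \<longleftrightarrow> contains_11_12 ({B}, c) \<or> contains_11_12 (Q, c)"
  by (auto simp: contains_11_12_def)

lemma contains_11_11_cong:
  "(\<And>x. x \<in> \<Union>P \<Longrightarrow> c x = c' x) \<Longrightarrow> contains_11_11 (P, c) = contains_11_11 (P, c')"
  unfolding contains_11_11_def by (metis UnionI fst_conv snd_conv)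

lemma contains_11_12_cong:
  "(\<And>x. x \<in> \<Union>P \<Longrightarrow> c x = c' x) \<Longrightarrow> contains_11_12 (P, c) = contains_11_12 (P, c')"
  unfolding contains_11_12_def by (metis UnionI fst_conv snd_conv)

lemma contains_11_11_mono: "Q \<subseteq> P \<Longrightarrow> contains_11_11 (Q, c) \<Longrightarrow> contains_11_11 (P, c)"
  unfolding contains_11_11_def by auto

lemma contains_11_12_mono: "Q \<subseteq> P \<Longrightarrow> contains_11_12 (Q, c) \<Longrightarrow> contains_11_12 (P, c)"
  unfolding contains_11_12_def by auto

lemma finite_avoiding_partitions: "finite A \<Longrightarrow> finite (avoiding_partitions A)"
proof -
  assume "finite A"
  then have "finite (Pow (Pow A) \<times> (A \<rightarrow>\<^sub>E ({1, 2} :: nat set)))"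
    by (intro finite_cartesian_product finite_PiE) auto
  moreover have "avoiding_partitions A \<subseteq> Pow (Pow A) \<times> (A \<rightarrow>\<^sub>E {1, 2})"
    by (auto simp: avoiding_partitions_def partition_on_def)
  ultimately show ?thesis
    by (rule finite_subset[rotated])
qed

definition insert_block :: "'a set \<Rightarrow> ('a \<Rightarrow> 'b) \<Rightarrow> 'a set set \<times> ('a \<Rightarrow> 'b) \<Rightarrow> 'a set set \<times> ('a \<Rightarrow> 'b)" where
  "insert_block B e = (\<lambda>(Q, d). (insert B Q, override_on d e B))"

definition remove_block :: "'a set \<Rightarrow> 'a set set \<times> ('a \<Rightarrow> 'b) \<Rightarrow> 'a set set \<times> ('a \<Rightarrow> 'b)" where
  "remove_block B = (\<lambda>(P, c). (P - {B}, restrict c (- B)))"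

lemma insert_block_avoiding:
  assumes "(Q, d) \<in> avoiding_partitions (A - B)" "B \<subseteq> A" "B \<noteq> {}" "e ` B \<subseteq> {1, 2}"
    and "\<not> contains_11_11 ({B}, e)" "\<not> contains_11_12 ({B}, e)"
  shows "insert_block B e (Q, d) \<in> avoiding_partitions A"
proof -
  let ?c = "override_on d e B"
  have Q: "partition_on (A - B) Q" and d: "d \<in> A - B \<rightarrow>\<^sub>E {1, 2}"
    and "\<not> contains_11_11 (Q, d)" "\<not> contains_11_12 (Q, d)"
    using assms(1) by (auto simp: avoiding_partitions_def)
  moreover have "\<And>x. x \<in> \<Union>Q \<Longrightarrow> ?c x = d x" "\<And>x. x \<in> \<Union>{B} \<Longrightarrow> ?c x = e x"
    using partition_onD1[OF Q] by (auto simp: override_on_def)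
  ultimately have "\<not> contains_11_11 (insert B Q, ?c)" "\<not> contains_11_12 (insert B Q, ?c)"
    using assms(5,6) contains_11_11_cong contains_11_12_cong
    by (metis contains_11_11_insert contains_11_12_insert)+
  moreover have "?c \<in> A \<rightarrow>\<^sub>E {1, 2}"
    using d assms(2,4) by (auto simp: override_on_def PiE_def Pi_def extensional_def)
  ultimately show ?thesis
    using partition_on_insert_block[OF Q assms(2,3)]
    by (simp add: insert_block_def avoiding_partitions_def)
qed

lemma remove_block_avoiding:
  assumes "(P, c) \<in> avoiding_partitions A" "B \<in> P"
  shows "remove_block B (P, c) \<in> avoiding_partitions (A - B)"
proof -
  let ?c = "restrict c (- B)"
  have P: "partition_on A P" and "c \<in> A \<rightarrow>\<^sub>E {1, 2}"
    and "\<not> contains_11_11 (P - {B}, c)" "\<not> contains_11_12 (P - {B}, c)"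
    using assms(1) contains_11_11_mono[OF Diff_subset] contains_11_12_mono[OF Diff_subset]
    by (auto simp: avoiding_partitions_def)
  moreover have "?c \<in> A - B \<rightarrow>\<^sub>E {1, 2}"
    using \<open>c \<in> A \<rightarrow>\<^sub>E {1, 2}\<close> by (auto simp: PiE_def Pi_def extensional_def)
  moreover have "\<And>x. x \<in> \<Union>(P - {B}) \<Longrightarrow> ?c x = c x"
    using partition_onD1[OF partition_on_remove_block[OF P assms(2)]] by auto
  ultimately show ?thesis
    using partition_on_remove_block[OF P assms(2)]
      contains_11_11_cong[of "P - {B}" ?c c] contains_11_12_cong[of "P - {B}" ?c c]
    by (simp add: remove_block_def avoiding_partitions_def)
qed

lemma bij_betw_insert_block:
  assumes "B \<subseteq> A" "B \<noteq> {}" "e ` B \<subseteq> {1, 2}"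
    and "\<not> contains_11_11 ({B}, e)" "\<not> contains_11_12 ({B}, e)"
  shows "bij_betw (insert_block B e) (avoiding_partitions (A - B))
           {\<sigma> \<in> avoiding_partitions A. B \<in> fst \<sigma> \<and> (\<forall>x\<in>B. snd \<sigma> x = e x)}"
proof (rule bij_betw_byWitness[where f' = "remove_block B"])
  show "\<forall>\<sigma>\<in>avoiding_partitions (A - B). remove_block B (insert_block B e \<sigma>) = \<sigma>"
  proof clarify
    fix Q d assume "(Q, d) \<in> avoiding_partitions (A - B)"
    then have "\<Union>Q = A - B" and d: "d \<in> A - B \<rightarrow>\<^sub>E {1, 2}"
      by (auto simp: avoiding_partitions_def partition_on_def)
    then have "B \<notin> Q"
      using assms(1,2) by blast
    moreover have "restrict (override_on d e B) (- B) = d"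
      using d by (auto simp: restrict_def override_on_def PiE_def extensional_def)
    ultimately show "remove_block B (insert_block B e (Q, d)) = (Q, d)"
      by (simp add: insert_block_def remove_block_def)
  qed
  show "\<forall>\<sigma>\<in>{\<sigma> \<in> avoiding_partitions A. B \<in> fst \<sigma> \<and> (\<forall>x\<in>B. snd \<sigma> x = e x)}.
          insert_block B e (remove_block B \<sigma>) = \<sigma>"
    by (auto simp: insert_block_def remove_block_def override_on_def restrict_def)
  show "insert_block B e ` avoiding_partitions (A - B)
          \<subseteq> {\<sigma> \<in> avoiding_partitions A. B \<in> fst \<sigma> \<and> (\<forall>x\<in>B. snd \<sigma> x = e x)}"
    using insert_block_avoiding[OF _ assms] by (auto simp: insert_block_def override_on_def)
  show "remove_block B ` {\<sigma> \<in> avoiding_partitions A. B \<in> fst \<sigma> \<and> (\<forall>x\<in>B. snd \<sigma> x = e x)}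
          \<subseteq> avoiding_partitions (A - B)"
    using remove_block_avoiding by fastforce
qed

lemma avoiding_block_cases:
  assumes "(P, c) \<in> avoiding_partitions A" "B \<in> P" "m \<in> B"
  shows "B = {m} \<or> (\<exists>k. k \<noteq> m \<and> B = {k, m})"
proof -
  have inj: "inj_on c B"
    using assms(1,2) by (auto simp: avoiding_partitions_def contains_11_11_def inj_on_def)
  have colours: "c ` B \<subseteq> {1, 2}"
    using assms(1,2) by (auto simp: avoiding_partitions_def partition_on_def)
  have "finite B"
    using inj_on_finite[OF inj colours] by simp
  moreover have "card B \<le> 2"
    using card_inj_on_le[OF inj colours] by simp
  ultimately have "\<forall>x\<in>B - {m}. \<forall>y\<in>B - {m}. x = y"
    using card_le_Suc0_iff_eq[of "B - {m}"] assms(3) by force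
  then show ?thesis
    using assms(3) by blast
qed

lemma avoiding_pair_block_colours:
  assumes "(P, c) \<in> avoiding_partitions A" "{k, m} \<in> P" "k < m"
  shows "c k = 2 \<and> c m = 1"
proof -
  have "c k \<in> {1, 2}" "c m \<in> {1, 2}"
    using assms(1,2) by (auto simp: avoiding_partitions_def partition_on_def)
  moreover have "c k \<noteq> c m" "\<not> (c k = 1 \<and> c m = 2)"
    using assms by (auto simp: avoiding_partitions_def contains_11_11_def contains_11_12_def)
  ultimately show ?thesis
    by auto
qed

lemma card_avoiding_singleton_block:
  assumes "finite A" "m \<in> A"
  shows "card {\<sigma> \<in> avoiding_partitions A. {m} \<in> fst \<sigma>} = 2 * card (avoiding_partitions (A - {m}))"
proof -
  define W where "W x = {\<sigma> \<in> avoiding_partitions A. {m} \<in> fst \<sigma> \<and> (\<forall>y\<in>{m}. snd \<sigma> y = x)}" for x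
  have card_W: "card (W x) = card (avoiding_partitions (A - {m}))" if "x \<in> {1, 2}" for x
    using bij_betw_same_card[OF bij_betw_insert_block[of "{m}" A "\<lambda>_. x"]] assms(2) that
    by (simp add: W_def contains_11_11_def contains_11_12_def)
  have "{\<sigma> \<in> avoiding_partitions A. {m} \<in> fst \<sigma>} = W 1 \<union> W 2"
    using assms(2) by (auto simp: W_def avoiding_partitions_def)
  moreover have "finite (W x)" for x
    using finite_avoiding_partitions[OF assms(1)] by (simp add: W_def)
  moreover have "W 1 \<inter> W 2 = {}"
    by (auto simp: W_def)
  ultimately show ?thesis
    using card_W by (simp add: card_Un_disjoint)
qed

lemma card_avoiding_pair_block:
  assumes "k \<in> A" "m \<in> A" "k < m"
  shows "card {\<sigma> \<in> avoiding_partitions A. {k, m} \<in> fst \<sigma>} = card (avoiding_partitions (A - {k, m}))"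
proof -
  define e where "e y = (if y = k then 2 else 1 :: nat)" for y
  have "{\<sigma> \<in> avoiding_partitions A. {k, m} \<in> fst \<sigma>}
          = {\<sigma> \<in> avoiding_partitions A. {k, m} \<in> fst \<sigma> \<and> (\<forall>x\<in>{k, m}. snd \<sigma> x = e x)}"
    using avoiding_pair_block_colours assms(3) by (fastforce simp: e_def)
  moreover have "\<not> contains_11_11 ({{k, m}}, e)" "\<not> contains_11_12 ({{k, m}}, e)"
    using assms(3) by (auto simp: e_def contains_11_11_def contains_11_12_def)
  ultimately show ?thesis
    using bij_betw_same_card[OF bij_betw_insert_block[of "{k, m}" A e]] assms
    by (simp add: e_def)
qed

lemma card_avoiding_partitions_Max:
  assumes "finite A" "A \<noteq> {}"
  defines "m \<equiv> Max A"
  shows "card (avoiding_partitions A)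
           = 2 * card (avoiding_partitions (A - {m})) + (\<Sum>k\<in>A - {m}. card (avoiding_partitions (A - {k, m})))"
proof -
  define S where "S = {\<sigma> \<in> avoiding_partitions A. {m} \<in> fst \<sigma>}"
  define T where "T k = {\<sigma> \<in> avoiding_partitions A. {k, m} \<in> fst \<sigma>}" for k
  have m: "m \<in> A"
    using assms by simp
  have below_m: "k < m" if "k \<in> A - {m}" for k
    using that Max_ge[OF assms(1), of k] unfolding m_def by fastforce
  have block_of_m_unique: "B = B'"
    if "(P, c) \<in> avoiding_partitions A" "B \<in> P" "B' \<in> P" "m \<in> B" "m \<in> B'" for P c B B'
    using that by (auto simp: avoiding_partitions_def partition_on_def disjoint_def)
  have "avoiding_partitions A \<subseteq> S \<union> (\<Union>k\<in>A - {m}. T k)"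
  proof
    fix \<sigma> assume "\<sigma> \<in> avoiding_partitions A"
    moreover obtain P c where P_c: "\<sigma> = (P, c)"
      by fastforce
    ultimately have \<sigma>: "(P, c) \<in> avoiding_partitions A"
      by simp
    then obtain B where B: "B \<in> P" "m \<in> B" "B \<subseteq> A"
      using m by (auto simp: avoiding_partitions_def partition_on_def)
    then show "\<sigma> \<in> S \<union> (\<Union>k\<in>A - {m}. T k)"
      using avoiding_block_cases[OF \<sigma> B(1,2)] \<sigma> P_c by (auto simp: S_def T_def)
  qed
  then have "avoiding_partitions A = S \<union> (\<Union>k\<in>A - {m}. T k)"
    by (auto simp: S_def T_def)
  moreover have "S \<inter> (\<Union>k\<in>A - {m}. T k) = {}"
    using block_of_m_unique by (fastforce simp: S_def T_def)
  moreover have "\<forall>k\<in>A - {m}. \<forall>k'\<in>A - {m}. k \<noteq> k' \<longrightarrow> T k \<inter> T k' = {}"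
    using block_of_m_unique by (fastforce simp: T_def doubleton_eq_iff)
  moreover have "finite S" "\<And>k. finite (T k)"
    using finite_avoiding_partitions[OF assms(1)] by (simp_all add: S_def T_def)
  ultimately have "card (avoiding_partitions A) = card S + (\<Sum>k\<in>A - {m}. card (T k))"
    using assms(1) by (simp add: card_Un_disjoint card_UN_disjoint)
  also have "\<dots> = 2 * card (avoiding_partitions (A - {m})) + (\<Sum>k\<in>A - {m}. card (avoiding_partitions (A - {k, m})))"
    using card_avoiding_singleton_block[OF assms(1) m] card_avoiding_pair_block[OF _ m below_m]
    by (simp add: S_def T_def)
  finally show ?thesis .
qed

lemma card_avoiding_partitions_step:
  assumes "finite A" "A \<noteq> {}"
    and smaller: "\<And>C. finite C \<Longrightarrow> card C < card A \<Longrightarrow> card (avoiding_partitions C) = avoiding_count (card C)"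
  shows "card (avoiding_partitions A) = 2 * avoiding_count (card A - 1) + (card A - 1) * avoiding_count (card A - 2)"
proof -
  define m where "m = Max A"
  have m: "m \<in> A"
    using assms(1,2) by (simp add: m_def)
  have "card (avoiding_partitions (A - {m})) = avoiding_count (card A - 1)"
    using smaller[of "A - {m}"] card_Diff1_less[OF assms(1) m] assms(1) m by simp
  moreover have "card (avoiding_partitions (A - {k, m})) = avoiding_count (card A - 2)" if "k \<in> A - {m}" for k
  proof -
    have "card (A - {k, m}) = card A - 2"
      using that m assms(1) by (simp add: card_Diff_subset)
    moreover have "card (A - {k, m}) < card A"
      using psubset_card_mono[OF assms(1), of "A - {k, m}"] m by blast
    ultimately show ?thesis
      using smaller[of "A - {k, m}"] assms(1) by simp
  qed
  ultimately show ?thesis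
    using card_avoiding_partitions_Max[OF assms(1,2)] assms(1) m by (simp add: m_def)
qed

lemma card_avoiding_partitions:
  "finite A \<Longrightarrow> card (avoiding_partitions A) = avoiding_count (card A)"
proof (induction "card A" arbitrary: A rule: less_induct)
  case less
  show ?case
  proof (cases "A = {}")
    case True
    then show ?thesis
      by (simp add: avoiding_count_eq_card)
  next
    case False
    have "{1..card A} \<noteq> {}"
      using less.prems False by (simp add: card_gt_0_iff Suc_le_eq)
    have "card (avoiding_partitions A) = 2 * avoiding_count (card A - 1) + (card A - 1) * avoiding_count (card A - 2)"
      using card_avoiding_partitions_step[OF less.prems False less.hyps] .
    also have "\<dots> = card (avoiding_partitions {1..card A})"
      using card_avoiding_partitions_step[OF _ \<open>{1..card A} \<noteq> {}\<close>] less.hyps by simp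
    finally show ?thesis
      by (simp only: avoiding_count_eq_card)
  qed
qed

theorem mainTheorem4:
  fixes n :: nat
  assumes "n \<ge> 3"
  shows "avoiding_count n = 2 * avoiding_count (n - 1) + (n - 1) * avoiding_count (n - 2)"
proof -
  have "{1..n} \<noteq> {}"
    using assms by simp
  then have "card (avoiding_partitions {1..n})
               = 2 * avoiding_count (card {1..n} - 1) + (card {1..n} - 1) * avoiding_count (card {1..n} - 2)"
    using card_avoiding_partitions_step[OF finite_atLeastAtMost] card_avoiding_partitions by blast
  then show ?thesis
    unfolding avoiding_count_eq_card[of n] by simp
qed

end
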